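(* Let $\mathfrak g$ be a Lie algebra with a Cartan subalgebra $\mathfrak h$ and a root decomposition with roots $\Delta$. Any parabolic decomposition $\Delta=\Delta^-\sqcup\Delta^0\sqcup\Delta^+$ is determined by some oriented $\langle\Delta^0\rangle_{\mathbb R}$-maximal chain of vector subspaces in $\langle\Delta\rangle_{\mathbb R}$; conversely, for an arbitrary subspace $V'$ of $\langle\Delta\rangle_{\mathbb R}$, any oriented $V'$-maximal chain in $\langle\Delta\rangle_{\mathbb R}$ defines a unique parabolic decomposition of $\Delta$ with $\Delta^0=\Delta\cap V'$.
   Context: $\langle S\rangle_{\mathbb R}$ denotes real span. For a subspace $V'\subset\langle\Delta\rangle_{\mathbb R}$ (resp. for $\langle\Delta^0\rangle_{\mathbb R}$) let $\Pi$ be the projection $\langle\Delta\rangle_{\mathbb R}\to\langle\Delta\rangle_{\mathbb R}/V'$. A decomposition $\Delta=\Delta^-\sqcup\Delta^0\sqcup\Delta^+$ is parabolic if, with $\Pi:\langle\Delta\rangle_{\mathbb R}\to\langle\Delta\rangle_{\mathbb R}/\langle\Delta^0\rangle_{\mathbb R}$, one has $\Pi(\Delta^-)\cap\Pi(\Delta^+)=\emptyset$, $0\notin\Pi(\Delta^\pm)$, and $\Pi(\Delta)\setminus\{0\}=\Pi(\Delta^-)\sqcup\Pi(\Delta^+)$ is a triangular decomposition, i.e. the cone of nonnegative real combinations of $\Pi(\Delta^+)\cup-\Pi(\Delta^-)$ contains no nonzero vector subspace. A chain of subspaces of a real vector space is a set of subspaces totally ordered by proper inclusion, maximal if not contained in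 a larger chain; a basic chain is a chain minimal with the property that every vector $x$ lies in $G_b\setminus G_a$ for some members $G_a\subset G_b$ with $\dim G_b/G_a=1$; each maximal chain contains a unique basic subchain; an orientation is a labeling by $\pm$ of the two half-spaces of $G_b\setminus G_a$ for each such codimension-one pair of the basic subchain. An (oriented) $V'$-maximal chain in $\langle\Delta\rangle_{\mathbb R}$ is the preimage under $\Pi$ of an (oriented) maximal chain in $\langle\Delta\rangle_{\mathbb R}/V'$. An oriented maximal chain in $\langle\Delta\rangle_{\mathbb R}/V'$ defines an $\mathbb R$-linear order on that quotient ($y>0$ iff $y$ lies in the $+$ half of $G_b\setminus G_a$ for the codimension-one pair with $y\in G_b\setminus G_a$), and the associated decomposition is $\Delta^0=\Delta\cap V'$, $\Delta^\pm=\{\alpha\in\Delta\setminus V':\pm\Pi(\alpha)>0\}$. *)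

theory Defs
  imports Complex_Main
begin

text \<open>Roots are modelled as a set \<open>\<Delta>\<close> of nonzero vectors in a real vector space
(e.g. the dual of a Cartan subalgebra viewed as a real vector space).
\<open>span\<close> is the real span.  Subspaces of the quotient \<open>span \<Delta> / V'\<close> are represented by
their preimages, i.e. subspaces \<open>G\<close> with \<open>V' \<subseteq> G \<subseteq> span \<Delta>\<close>; \<open>\<Pi>(X) \<subseteq> \<Pi>(Y)\<close>
is rendered as \<open>X \<subseteq> Y + V'\<close> etc.\<close>

definition nonneg_comb :: "'v::real_vector set \<Rightarrow> 'v set" where
  "nonneg_comb S = {y. \<exists>F c. finite F \<and> F \<subseteq> S \<and> (\<forall>x\<in>F. 0 \<le> c x) \<and> y = (\<Sum>x\<in>F. c x *\<^sub>R x)}"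

text \<open>Parabolic decomposition \<open>\<Delta> = Dm \<sqcup> D0 \<sqcup> Dp\<close>, with \<open>\<Pi>\<close> the projection modulo
\<open>span D0\<close>.\<close>
definition parabolic :: "'v::real_vector set \<Rightarrow> 'v set \<Rightarrow> 'v set \<Rightarrow> 'v set \<Rightarrow> bool" where
  "parabolic \<Delta> Dm D0 Dp \<longleftrightarrow>
     \<Delta> = Dm \<union> D0 \<union> Dp \<and> Dm \<inter> D0 = {} \<and> Dm \<inter> Dp = {} \<and> D0 \<inter> Dp = {} \<and>
     \<comment> \<open>\<Pi>(Dm) \<inter> \<Pi>(Dp) = \<emptyset>\<close>
     (\<forall>a\<in>Dm. \<forall>b\<in>Dp. a - b \<notin> span D0) \<and>
     \<comment> \<open>0 \<notin> \<Pi>(D\<pm>)\<close>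
     (\<forall>a\<in>Dm. a \<notin> span D0) \<and> (\<forall>b\<in>Dp. b \<notin> span D0) \<and>
     \<comment> \<open>the cone spanned by \<Pi>(Dp) \<union> -\<Pi>(Dm) contains no nonzero subspace of the quotient\<close>
     \<not> (\<exists>S. subspace S \<and> span D0 \<subset> S \<and>
            S \<subseteq> {k + w | k w. k \<in> nonneg_comb (Dp \<union> uminus ` Dm) \<and> w \<in> span D0})"

definition quot_chain :: "'v::real_vector set \<Rightarrow> 'v set \<Rightarrow> 'v set set \<Rightarrow> bool" where
  "quot_chain W V' C \<longleftrightarrow>
     (\<forall>G\<in>C. subspace G \<and> V' \<subseteq> G \<and> G \<subseteq> W) \<and> (\<forall>G\<in>C. \<forall>H\<in>C. G \<subseteq> H \<or> H \<subseteq> G)"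

definition quot_max_chain :: "'v::real_vector set \<Rightarrow> 'v set \<Rightarrow> 'v set set \<Rightarrow> bool" where
  "quot_max_chain W V' C \<longleftrightarrow> quot_chain W V' C \<and> \<not> (\<exists>C'. quot_chain W V' C' \<and> C \<subset> C')"

definition codim_one :: "'v::real_vector set \<Rightarrow> 'v set \<Rightarrow> bool" where
  "codim_one A B \<longleftrightarrow> A \<subseteq> B \<and> (\<exists>v. v \<notin> A \<and> B = {a + t *\<^sub>R v | a t. a \<in> A})"

definition codim_one_pair :: "'v::real_vector set set \<Rightarrow> 'v set \<Rightarrow> 'v set \<Rightarrow> bool" where
  "codim_one_pair C A B \<longleftrightarrow> A \<in> C \<and> B \<in> C \<and> codim_one A B"

definition half_space :: "'v::real_vector set \<Rightarrow> 'v set \<Rightarrow> 'v set \<Rightarrow> bool" where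
  "half_space A B H \<longleftrightarrow> (\<exists>v\<in>B - A. H = {a + t *\<^sub>R v | a t. a \<in> A \<and> 0 < t})"

text \<open>An orientation of the maximal chain \<open>C\<close>: for each codimension-one pair \<open>(A,B)\<close>
(these are exactly the codimension-one pairs of the basic subchain) the half of
\<open>B - A\<close> labelled \<open>+\<close>; the other half is labelled \<open>-\<close>.\<close>
definition orientation :: "'v::real_vector set set \<Rightarrow> ('v set \<Rightarrow> 'v set \<Rightarrow> 'v set) \<Rightarrow> bool" where
  "orientation C ori \<longleftrightarrow> (\<forall>A B. codim_one_pair C A B \<longrightarrow> half_space A B (ori A B))"

definition oriented_max_chain ::
  "'v::real_vector set \<Rightarrow> 'v set \<Rightarrow> 'v set set \<Rightarrow> ('v set \<Rightarrow> 'v set \<Rightarrow> 'v set) \<Rightarrow> bool" where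
  "oriented_max_chain W V' C ori \<longleftrightarrow> quot_max_chain W V' C \<and> orientation C ori"

definition chain_pos :: "'v::real_vector set set \<Rightarrow> ('v set \<Rightarrow> 'v set \<Rightarrow> 'v set) \<Rightarrow> 'v \<Rightarrow> bool" where
  "chain_pos C ori y \<longleftrightarrow> (\<exists>A B. codim_one_pair C A B \<and> y \<in> B - A \<and> y \<in> ori A B)"

definition assoc_plus :: "'v::real_vector set \<Rightarrow> 'v set \<Rightarrow> 'v set set \<Rightarrow> ('v set \<Rightarrow> 'v set \<Rightarrow> 'v set) \<Rightarrow> 'v set" where
  "assoc_plus \<Delta> V' C ori = {\<alpha> \<in> \<Delta> - V'. chain_pos C ori \<alpha>}"

definition assoc_minus :: "'v::real_vector set \<Rightarrow> 'v set \<Rightarrow> 'v set set \<Rightarrow> ('v set \<Rightarrow> 'v set \<Rightarrow> 'v set) \<Rightarrow> 'v set" where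
  "assoc_minus \<Delta> V' C ori = {\<alpha> \<in> \<Delta> - V'. chain_pos C ori (- \<alpha>)}"

end

theory Submission
  imports Defs
begin

(*
  With x \<le> y meaning y - x \<in> K, linear orders on span \<Delta> / V' correspond to convex cones K
  with K \<inter> -K = V' and K \<union> -K = span \<Delta>. The positive elements of an oriented V'-maximal
  chain, together with V', form such a cone, and the signs of the roots in any such order give
  a parabolic decomposition: a nonnegative combination of strictly positive vectors is 0 or
  strictly positive, so the cone it generates contains no line.

  Conversely, for a parabolic decomposition the cone generated by \<Delta>\<^sup>+, -\<Delta>\<^sup>- and
  span \<Delta>\<^sup>0 is pointed modulo span \<Delta>\<^sup>0, and by Zorn's lemma it extends to the cone K of
  a linear order. The K-convex subspaces form a maximal chain: for y > 0, every x between -r y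
  and r y is c y plus an element infinitely small compared with y (c is a Dedekind cut), so
  the infinitely small elements form a convex subspace of codimension one in the smallest
  convex subspace containing y. Orienting each such step by K makes the positive elements of
  the chain exactly those of K outside span \<Delta>\<^sup>0.
*)

lemma nonneg_comb_0: "0 \<in> nonneg_comb S"
  unfolding nonneg_comb_def by (intro CollectI exI[of _ "{}"]) auto

lemma nonneg_comb_superset: "x \<in> S \<Longrightarrow> x \<in> nonneg_comb S"
  unfolding nonneg_comb_def by (intro CollectI exI[of _ "{x}"] exI[of _ "\<lambda>_. 1"]) auto

lemma nonneg_comb_mono: "S \<subseteq> T \<Longrightarrow> nonneg_comb S \<subseteq> nonneg_comb T"
  unfolding nonneg_comb_def by blast

lemma nonneg_comb_scale:
  assumes "x \<in> nonneg_comb S" "0 \<le> t"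
  shows "t *\<^sub>R x \<in> nonneg_comb S"
proof -
  obtain F c where F: "finite F" "F \<subseteq> S" "\<forall>x\<in>F. 0 \<le> c x" "x = (\<Sum>x\<in>F. c x *\<^sub>R x)"
    using assms(1) unfolding nonneg_comb_def by blast
  have "t *\<^sub>R x = (\<Sum>x\<in>F. (t * c x) *\<^sub>R x)"
    using F(4) by (simp add: scaleR_sum_right)
  then show ?thesis
    unfolding nonneg_comb_def using F(1-3) assms(2)
    by (intro CollectI exI[of _ F] exI[of _ "\<lambda>x. t * c x"]) auto
qed

lemma nonneg_comb_add:
  assumes "x \<in> nonneg_comb S" "y \<in> nonneg_comb S"
  shows "x + y \<in> nonneg_comb S"
proof -
  obtain F c where F: "finite F" "F \<subseteq> S" "\<forall>x\<in>F. 0 \<le> c x" "x = (\<Sum>x\<in>F. c x *\<^sub>R x)"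
    using assms(1) unfolding nonneg_comb_def by blast
  obtain G d where G: "finite G" "G \<subseteq> S" "\<forall>x\<in>G. 0 \<le> d x" "y = (\<Sum>x\<in>G. d x *\<^sub>R x)"
    using assms(2) unfolding nonneg_comb_def by blast
  define c' where "c' z = (if z \<in> F then c z else 0)" for z
  define d' where "d' z = (if z \<in> G then d z else 0)" for z
  have "x = (\<Sum>z\<in>F \<union> G. c' z *\<^sub>R z)"
    unfolding F(4) c'_def by (rule sum.mono_neutral_cong_left) (use F(1) G(1) in auto)
  moreover have "y = (\<Sum>z\<in>F \<union> G. d' z *\<^sub>R z)"
    unfolding G(4) d'_def by (rule sum.mono_neutral_cong_left) (use F(1) G(1) in auto)
  ultimately have "x + y = (\<Sum>z\<in>F \<union> G. (c' z + d' z) *\<^sub>R z)"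
    by (simp add: scaleR_add_left sum.distrib)
  moreover have "\<forall>z\<in>F \<union> G. 0 \<le> c' z + d' z"
    using F(3) G(3) unfolding c'_def d'_def by auto
  ultimately show ?thesis
    unfolding nonneg_comb_def using F(1,2) G(1,2)
    by (intro CollectI exI[of _ "F \<union> G"] exI[of _ "\<lambda>z. c' z + d' z"]) auto
qed

lemma nonneg_comb_least:
  assumes "S \<subseteq> T" "0 \<in> T"
    and "\<And>x y. x \<in> T \<Longrightarrow> y \<in> T \<Longrightarrow> x + y \<in> T"
    and "\<And>x t. x \<in> T \<Longrightarrow> 0 \<le> t \<Longrightarrow> t *\<^sub>R x \<in> T"
  shows "nonneg_comb S \<subseteq> T"
proof
  fix y assume "y \<in> nonneg_comb S"
  then obtain F c where F: "finite F" "F \<subseteq> S" "\<forall>x\<in>F. 0 \<le> c x" "y = (\<Sum>x\<in>F. c x *\<^sub>R x)"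
    unfolding nonneg_comb_def by blast
  have "F \<subseteq> S \<Longrightarrow> \<forall>x\<in>F. 0 \<le> c x \<Longrightarrow> (\<Sum>x\<in>F. c x *\<^sub>R x) \<in> T"
    using F(1)
  proof (induction F rule: finite_induct)
    case (insert x F)
    then show ?case
      using assms by (simp add: subset_iff)
  qed (simp add: assms(2))
  then show "y \<in> T"
    using F by blast
qed

lemma nonneg_comb_subset_span: "nonneg_comb S \<subseteq> span S"
  by (rule nonneg_comb_least)
    (auto intro: real_vector.span_base real_vector.span_zero real_vector.span_add real_vector.span_scale)

lemma subspace_Union_chain:
  assumes "\<G> \<noteq> {}" "\<And>G. G \<in> \<G> \<Longrightarrow> subspace G"
    and "\<And>G H. G \<in> \<G> \<Longrightarrow> H \<in> \<G> \<Longrightarrow> G \<subseteq> H \<or> H \<subseteq> G"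
  shows "subspace (\<Union>\<G>)"
  unfolding real_vector.subspace_def
proof (intro conjI ballI allI)
  show "0 \<in> \<Union>\<G>"
    using assms(1,2) real_vector.subspace_0 by blast
next
  fix x y assume "x \<in> \<Union>\<G>" "y \<in> \<Union>\<G>"
  then obtain G where "G \<in> \<G>" "x \<in> G" "y \<in> G"
    using assms(3) by (metis UnionE subsetD)
  then show "x + y \<in> \<Union>\<G>"
    using assms(2) real_vector.subspace_add by blast
next
  fix c x assume "x \<in> \<Union>\<G>"
  then show "c *\<^sub>R x \<in> \<Union>\<G>"
    using assms(2) real_vector.subspace_scale by blast
qed

lemma span_insert_subspace:
  assumes "subspace A"
  shows "span (insert v A) = {a + t *\<^sub>R v | a t. a \<in> A}"
proof -
  have spanA: "span A = A"
    using assms by (rule real_vector.span_eq_iff[THEN iffD2])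
  show ?thesis
  proof (intro set_eqI iffI)
    fix x assume "x \<in> span (insert v A)"
    then obtain t where "x - t *\<^sub>R v \<in> A"
      unfolding real_vector.span_insert spanA by blast
    then show "x \<in> {a + t *\<^sub>R v | a t. a \<in> A}"
      by (intro CollectI exI[of _ "x - t *\<^sub>R v"] exI[of _ t]) simp
  next
    fix x assume "x \<in> {a + t *\<^sub>R v | a t. a \<in> A}"
    then obtain a t where "a \<in> A" "x = a + t *\<^sub>R v"
      by blast
    then show "x \<in> span (insert v A)"
      unfolding real_vector.span_insert spanA by (intro CollectI exI[of _ t]) simp
  qed
qed

section \<open>Cones modulo a subspace\<close>

(* x \<le> y :<-> y - x \<in> K is a preorder on W identifying the elements of Z with 0; for a
   pointed cone it is a partial order on W / Z, for a total cone a linear one. *)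
locale convex_cone =
  fixes Z W K :: "'v::real_vector set"
  assumes subspace_Z: "subspace Z" and subspace_W: "subspace W"
    and subspace_in_cone: "Z \<subseteq> K" and cone_in_space: "K \<subseteq> W"
    and add_mem: "x \<in> K \<Longrightarrow> y \<in> K \<Longrightarrow> x + y \<in> K"
    and scale_mem: "x \<in> K \<Longrightarrow> 0 \<le> t \<Longrightarrow> t *\<^sub>R x \<in> K"
begin

lemma zero_mem: "0 \<in> K"
  using subspace_in_cone real_vector.subspace_0[OF subspace_Z] by blast

lemma span_insert_subset:
  assumes "x \<in> K" "- x \<in> K"
  shows "span (insert x Z) \<subseteq> K"
proof
  fix y assume "y \<in> span (insert x Z)"
  then obtain z t where "z \<in> Z" "y = z + t *\<^sub>R x"
    using span_insert_subspace[OF subspace_Z] by blast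
  moreover have "t *\<^sub>R x \<in> K"
    using scale_mem[OF assms(1), of t] scale_mem[OF assms(2), of "- t"] by (cases "0 \<le> t") auto
  ultimately show "y \<in> K"
    using add_mem subspace_in_cone by blast
qed


lemma convex_cone_add_ray:
  assumes "x \<in> W"
  shows "convex_cone Z W {k + t *\<^sub>R x | k t. k \<in> K \<and> 0 \<le> t}"
    (is "convex_cone Z W ?K")
proof
  show "subspace Z" "subspace W"
    by (rule subspace_Z subspace_W)+
  show "Z \<subseteq> ?K"
  proof
    fix z assume "z \<in> Z"
    then show "z \<in> ?K"
      using subspace_in_cone by (intro CollectI exI[of _ z] exI[of _ 0]) auto
  qed
  show "?K \<subseteq> W"
    using cone_in_space assms real_vector.subspace_add[OF subspace_W]
      real_vector.subspace_scale[OF subspace_W]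
    by blast
next
  fix u v assume "u \<in> ?K" "v \<in> ?K"
  then obtain k s l t where "u = k + s *\<^sub>R x" "v = l + t *\<^sub>R x" "k \<in> K" "l \<in> K" "0 \<le> s" "0 \<le> t"
    by blast
  then show "u + v \<in> ?K"
    by (intro CollectI exI[of _ "k + l"] exI[of _ "s + t"]) (simp_all add: add_mem algebra_simps)
next
  fix u and c :: real assume "u \<in> ?K" "0 \<le> c"
  then obtain k s where "u = k + s *\<^sub>R x" "k \<in> K" "0 \<le> s"
    by blast
  then show "c *\<^sub>R u \<in> ?K"
    using \<open>0 \<le> c\<close>
    by (intro CollectI exI[of _ "c *\<^sub>R k"] exI[of _ "c * s"]) (simp_all add: scale_mem algebra_simps)
qed
end

locale pointed_cone = convex_cone +
  assumes pointed: "x \<in> K \<Longrightarrow> - x \<in> K \<Longrightarrow> x \<in> Z"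

locale total_cone = pointed_cone +
  assumes total: "x \<in> W \<Longrightarrow> x \<in> K \<or> - x \<in> K"

lemma pointed_cone_Union_chain:
  assumes "\<K> \<noteq> {}" "\<And>K. K \<in> \<K> \<Longrightarrow> pointed_cone Z W K"
    and "\<And>K L. K \<in> \<K> \<Longrightarrow> L \<in> \<K> \<Longrightarrow> K \<subseteq> L \<or> L \<subseteq> K"
  shows "pointed_cone Z W (\<Union>\<K>)"
proof (intro pointed_cone.intro convex_cone.intro pointed_cone_axioms.intro)
  obtain K0 where K0: "K0 \<in> \<K>"
    using assms(1) by blast
  have cone: "convex_cone Z W K" if "K \<in> \<K>" for K
    using pointed_cone.axioms(1)[OF assms(2)[OF that]] .
  have common: "\<exists>K\<in>\<K>. x \<in> K \<and> y \<in> K" if "x \<in> \<Union>\<K>" "y \<in> \<Union>\<K>" for x y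
    using that assms(3) by (metis UnionE subsetD)
  show "subspace Z" "subspace W"
    using convex_cone.subspace_Z convex_cone.subspace_W cone[OF K0] by blast+
  show "Z \<subseteq> \<Union>\<K>"
    using convex_cone.subspace_in_cone[OF cone[OF K0]] K0 by blast
  show "\<Union>\<K> \<subseteq> W"
    using convex_cone.cone_in_space[OF cone] by blast
  show "x + y \<in> \<Union>\<K>" if "x \<in> \<Union>\<K>" "y \<in> \<Union>\<K>" for x y
    using common[OF that] convex_cone.add_mem[OF cone] by blast
  show "t *\<^sub>R x \<in> \<Union>\<K>" if "x \<in> \<Union>\<K>" "0 \<le> t" for x t
    using that convex_cone.scale_mem[OF cone] by blast
  show "x \<in> Z" if "x \<in> \<Union>\<K>" "- x \<in> \<Union>\<K>" for x
    using common[OF that] pointed_cone.pointed[OF assms(2)] by blast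
qed

context pointed_cone
begin

lemma add_notin_subspace:
  assumes "x \<in> K" "x \<notin> Z" "y \<in> K"
  shows "x + y \<notin> Z"
proof
  assume "x + y \<in> Z"
  then have "y + - (x + y) \<in> K"
    using add_mem assms(3) subspace_in_cone real_vector.subspace_neg[OF subspace_Z] by blast
  then show False
    using pointed assms(1,2) by simp
qed

lemma nonneg_coeff:
  assumes "y \<in> K" "y \<notin> Z" "t *\<^sub>R y \<in> K"
  shows "0 \<le> t"
proof (rule ccontr)
  assume "\<not> 0 \<le> t"
  then have "0 \<le> - 1 / t"
    by simp
  from scale_mem[OF assms(3) this] have "(- 1 / t) *\<^sub>R (t *\<^sub>R y) \<in> K" .
  moreover have "(- 1 / t) *\<^sub>R (t *\<^sub>R y) = - y"
    using \<open>\<not> 0 \<le> t\<close> by simp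
  ultimately have "- y \<in> K"
    by simp
  then show False
    using pointed assms(1,2) by blast
qed

lemma nonneg_comb_strict: "nonneg_comb (K - Z) \<subseteq> insert 0 (K - Z)"
proof (rule nonneg_comb_least)
  fix x y assume x: "x \<in> insert 0 (K - Z)" and y: "y \<in> insert 0 (K - Z)"
  show "x + y \<in> insert 0 (K - Z)"
  proof (cases "x = 0")
    case False
    then have "x + y \<in> K" "x + y \<notin> Z"
      using x y zero_mem add_mem add_notin_subspace by auto
    then show ?thesis
      by blast
  qed (use y in simp)
next
  fix x and t :: real assume x: "x \<in> insert 0 (K - Z)" and "0 \<le> t"
  have "t *\<^sub>R x \<notin> Z" if "0 < t" "x \<in> K - Z"
    using that real_vector.subspace_scale[OF subspace_Z, of "t *\<^sub>R x" "1 / t"] by auto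
  then show "t *\<^sub>R x \<in> insert 0 (K - Z)"
    using x \<open>0 \<le> t\<close> scale_mem by (cases "t = 0") auto
qed auto

lemma no_subspace_in_nonneg_comb:
  assumes "P \<subseteq> K - Z" "Y \<subseteq> Z" "subspace Y"
  shows "\<not> (\<exists>S. subspace S \<and> Y \<subset> S \<and> S \<subseteq> {k + w | k w. k \<in> nonneg_comb P \<and> w \<in> Y})"
proof
  assume "\<exists>S. subspace S \<and> Y \<subset> S \<and> S \<subseteq> {k + w | k w. k \<in> nonneg_comb P \<and> w \<in> Y}"
  then obtain S x where S: "subspace S" "S \<subseteq> {k + w | k w. k \<in> nonneg_comb P \<and> w \<in> Y}"
    and x: "x \<in> S" "x \<notin> Y"
    by blast
  have comb: "nonneg_comb P \<subseteq> insert 0 (K - Z)"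
    using nonneg_comb_strict nonneg_comb_mono[OF assms(1)] by blast
  obtain k w where k: "k \<in> nonneg_comb P" "w \<in> Y" "x = k + w"
    using S(2) x(1) by blast
  obtain k' w' where k': "k' \<in> nonneg_comb P" "w' \<in> Y" "- x = k' + w'"
    using S real_vector.subspace_neg[OF S(1) x(1)] by blast
  have "k \<noteq> 0"
    using k x(2) by auto
  then have "k \<in> K" "k \<notin> Z" "k' \<in> K"
    using comb k(1) k'(1) zero_mem by blast+
  moreover have "k + k' \<in> Z"
  proof -
    have kk: "k = x - w" "k' = - x - w'"
      using k(3) k'(3) by (metis add_diff_cancel_right')+
    have "k + k' = - (w + w')"
      unfolding kk by (simp add: algebra_simps)
    then show ?thesis
      using k(2) k'(2) assms(2,3) real_vector.subspace_add real_vector.subspace_neg by (metis subsetD)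
  qed
  ultimately show False
    using add_notin_subspace by blast
qed

lemma pointed_cone_add_ray:
  assumes "x \<in> W" "- x \<notin> K"
  shows "pointed_cone Z W {k + t *\<^sub>R x | k t. k \<in> K \<and> 0 \<le> t}"
    (is "pointed_cone Z W ?K")
proof (intro pointed_cone.intro pointed_cone_axioms.intro convex_cone_add_ray assms(1))
  fix u assume "u \<in> ?K" "- u \<in> ?K"
  then obtain k s l t where u: "u = k + s *\<^sub>R x" "- u = l + t *\<^sub>R x" and kl: "k \<in> K" "l \<in> K"
    and st: "0 \<le> s" "0 \<le> t"
    by blast
  have "(k + l) + (s + t) *\<^sub>R x = (k + s *\<^sub>R x) + (l + t *\<^sub>R x)"
    by (simp add: algebra_simps)
  also have "\<dots> = 0"
    using u(1)[symmetric] u(2)[symmetric] by simp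
  finally have sum: "k + l = - ((s + t) *\<^sub>R x)"
    by (simp add: eq_neg_iff_add_eq_0)
  show "u \<in> Z"
  proof (cases "s + t = 0")
    case True
    then have "s = 0" "t = 0"
      using st by linarith+
    then have "u \<in> K" "- u \<in> K"
      using u kl by simp_all
    then show ?thesis
      by (rule pointed)
  next
    case False
    then have "(1 / (s + t)) *\<^sub>R (k + l) = - x"
      unfolding sum by simp
    moreover have "(1 / (s + t)) *\<^sub>R (k + l) \<in> K"
      using st kl add_mem scale_mem by simp
    ultimately show ?thesis
      using assms(2) by simp
  qed
qed

lemma total_cone_if_maximal:
  assumes max: "\<And>K'. K \<subseteq> K' \<Longrightarrow> pointed_cone Z W K' \<Longrightarrow> K' = K"
  shows "total_cone Z W K"
proof (intro total_cone.intro total_cone_axioms.intro pointed_cone_axioms)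
  fix x assume "x \<in> W"
  show "x \<in> K \<or> - x \<in> K"
  proof (rule ccontr)
    assume not_in: "\<not> (x \<in> K \<or> - x \<in> K)"
    define K' where "K' = {k + t *\<^sub>R x | k t. k \<in> K \<and> 0 \<le> t}"
    have "K \<subseteq> K'"
    proof
      fix k assume "k \<in> K"
      then show "k \<in> K'"
        unfolding K'_def by (intro CollectI exI[of _ k] exI[of _ 0]) simp
    qed
    moreover have "pointed_cone Z W K'"
      unfolding K'_def using pointed_cone_add_ray \<open>x \<in> W\<close> not_in by blast
    ultimately have "K' = K"
      by (rule max)
    moreover have "x \<in> K'"
      unfolding K'_def using zero_mem by (intro CollectI exI[of _ 0] exI[of _ "1::real"]) simp
    ultimately show False
      using not_in by blast
  qed
qed

lemma extends_to_total_cone: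
  obtains K' where "K \<subseteq> K'" "total_cone Z W K'"
proof -
  define \<A> where "\<A> = {K'. K \<subseteq> K' \<and> pointed_cone Z W K'}"
  have "\<exists>M\<in>\<A>. \<forall>X\<in>\<A>. M \<subseteq> X \<longrightarrow> X = M"
  proof (rule subset_Zorn_nonempty)
    show "\<A> \<noteq> {}"
      unfolding \<A>_def using pointed_cone_axioms by blast
  next
    fix \<C> assume "\<C> \<noteq> {}" and "subset.chain \<A> \<C>"
    then have "\<C> \<subseteq> \<A>" "\<And>X Y. X \<in> \<C> \<Longrightarrow> Y \<in> \<C> \<Longrightarrow> X \<subseteq> Y \<or> Y \<subseteq> X"
      unfolding subset_chain_def by auto
    then have "K \<subseteq> \<Union>\<C>" "pointed_cone Z W (\<Union>\<C>)"
      using \<open>\<C> \<noteq> {}\<close> pointed_cone_Union_chain[of \<C>] unfolding \<A>_def by blast+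
    then show "\<Union>\<C> \<in> \<A>"
      unfolding \<A>_def by blast
  qed
  then obtain M where "M \<in> \<A>" and max: "\<forall>X\<in>\<A>. M \<subseteq> X \<longrightarrow> X = M"
    by blast
  then have "K \<subseteq> M" and M: "pointed_cone Z W M"
    unfolding \<A>_def by blast+
  have "total_cone Z W M"
  proof (rule pointed_cone.total_cone_if_maximal[OF M])
    fix K' assume "M \<subseteq> K'" "pointed_cone Z W K'"
    then show "K' = M"
      using max \<open>K \<subseteq> M\<close> unfolding \<A>_def by blast
  qed
  then show ?thesis
    using that \<open>K \<subseteq> M\<close> by blast
qed

end

lemma (in total_cone) parabolic_cone_decomposition:
  assumes "\<Delta> \<subseteq> W"
  shows "parabolic \<Delta> {\<alpha> \<in> \<Delta> - Z. - \<alpha> \<in> K} (\<Delta> \<inter> Z) {\<alpha> \<in> \<Delta> - Z. \<alpha> \<in> K}"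
    (is "parabolic \<Delta> ?Dm ?D0 ?Dp")
proof -
  have span_D0: "span ?D0 \<subseteq> Z"
    using real_vector.span_minimal[OF _ subspace_Z] by blast
  have neg_Z: "- x \<in> Z \<longleftrightarrow> x \<in> Z" for x
    using real_vector.subspace_neg[OF subspace_Z] by force
  have "\<Delta> = ?Dm \<union> ?D0 \<union> ?Dp"
    using total assms by blast
  moreover have "?Dm \<inter> ?Dp = {}"
    using pointed by blast
  moreover have "a - b \<notin> span ?D0" if "a \<in> ?Dm" "b \<in> ?Dp" for a b
  proof -
    have "b + - a \<notin> Z"
      using add_notin_subspace that by blast
    then show ?thesis
      using span_D0 neg_Z[of "a - b"] by auto
  qed
  moreover have "\<not> (\<exists>S. subspace S \<and> span ?D0 \<subset> S \<and>
      S \<subseteq> {k + w | k w. k \<in> nonneg_comb (?Dp \<union> uminus ` ?Dm) \<and> w \<in> span ?D0})"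
    using neg_Z by (intro no_subspace_in_nonneg_comb span_D0 real_vector.subspace_span) auto
  ultimately show ?thesis
    unfolding parabolic_def using span_D0 by blast
qed

section \<open>Codimension-one pairs and oriented chains\<close>

lemma codim_one_iff:
  assumes "subspace A"
  shows "codim_one A B \<longleftrightarrow> (\<exists>v. v \<notin> A \<and> B = span (insert v A))"
  using real_vector.span_superset[of "insert _ A"]
  unfolding codim_one_def span_insert_subspace[OF assms] by blast

lemma codim_one_between:
  assumes "subspace A" "subspace M" "codim_one A B" "A \<subseteq> M" "M \<subseteq> B"
  shows "M = A \<or> M = B"
proof (rule disjCI)
  assume "M \<noteq> B"
  obtain v where v: "v \<notin> A" "B = span (insert v A)"
    using assms(1,3) codim_one_iff by blast
  have "v \<notin> M"
    using real_vector.span_minimal[of "insert v A" M] assms(2,4,5) v(2) \<open>M \<noteq> B\<close> by blast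
  show "M = A"
  proof (rule ccontr)
    assume "M \<noteq> A"
    then obtain b where b: "b \<in> M" "b \<notin> A"
      using assms(4) by blast
    have "b \<in> span (insert v A)"
      using b(1) assms(5) v(2) by blast
    then have "v \<in> span (insert b A)"
      using real_vector.in_span_insert b(2) assms(1) real_vector.span_eq_iff by metis
    then have "v \<in> M"
      using real_vector.span_minimal[of "insert b A" M] assms(2,4) b(1) by blast
    then show False
      using \<open>v \<notin> M\<close> by blast
  qed
qed

lemma codim_one_psubset:
  assumes "subspace A" "codim_one A B"
  shows "A \<subset> B"
proof -
  obtain v where "v \<notin> A" "B = span (insert v A)"
    using assms codim_one_iff by blast
  then show ?thesis
    using real_vector.span_superset[of "insert v A"] by blast
qed

lemma codim_one_subspace: "subspace A \<Longrightarrow> codim_one A B \<Longrightarrow> subspace B"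
  using codim_one_iff real_vector.subspace_span by metis

lemma codim_one_eq_span_insert:
  assumes "subspace A" "codim_one A B" "v \<in> B - A"
  shows "B = span (insert v A)"
proof -
  have AB: "A \<subset> B" and "subspace B"
    using assms(1,2) codim_one_psubset codim_one_subspace by blast+
  then have "span (insert v A) \<subseteq> B"
    using assms(3) real_vector.span_minimal[of "insert v A" B] by blast
  moreover have "A \<subseteq> span (insert v A)" "v \<in> span (insert v A)"
    using real_vector.span_superset[of "insert v A"] by blast+
  ultimately show ?thesis
    using codim_one_between[OF assms(1) real_vector.subspace_span assms(2)] assms(3) by blast
qed

lemma half_spaceE:
  assumes "half_space A B H"
  obtains v where "v \<in> B - A" "H = {a + t *\<^sub>R v | a t. a \<in> A \<and> 0 < t}"
  using assms unfolding half_space_def by blast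

lemma half_space_add_left:
  assumes "subspace A" "half_space A B H" "a \<in> A" "x \<in> H"
  shows "a + x \<in> H"
proof -
  obtain v where H: "H = {a + t *\<^sub>R v | a t. a \<in> A \<and> 0 < t}"
    using assms(2) by (rule half_spaceE)
  then obtain b t where "x = b + t *\<^sub>R v" "b \<in> A" "0 < t"
    using assms(4) by blast
  moreover have "a + b \<in> A"
    using assms(1,3) \<open>b \<in> A\<close> real_vector.subspace_add by blast
  ultimately show ?thesis
    unfolding H by (intro CollectI exI[of _ "a + b"] exI[of _ t]) (simp add: add.assoc)
qed

lemma half_space_add:
  assumes "subspace A" "half_space A B H" "x \<in> H" "y \<in> H"
  shows "x + y \<in> H"
proof -
  obtain v where H: "H = {a + t *\<^sub>R v | a t. a \<in> A \<and> 0 < t}"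
    using assms(2) by (rule half_spaceE)
  obtain a s b t where "x = a + s *\<^sub>R v" "a \<in> A" "0 < s" "y = b + t *\<^sub>R v" "b \<in> A" "0 < t"
    using assms(3,4) unfolding H by blast
  moreover have "a + b \<in> A"
    using assms(1) calculation real_vector.subspace_add by blast
  ultimately show ?thesis
    unfolding H by (intro CollectI exI[of _ "a + b"] exI[of _ "s + t"]) (simp add: algebra_simps)
qed

lemma half_space_scale:
  assumes "subspace A" "half_space A B H" "x \<in> H" "0 < c"
  shows "c *\<^sub>R x \<in> H"
proof -
  obtain v where H: "H = {a + t *\<^sub>R v | a t. a \<in> A \<and> 0 < t}"
    using assms(2) by (rule half_spaceE)
  obtain a t where "x = a + t *\<^sub>R v" "a \<in> A" "0 < t"
    using assms(3) unfolding H by blast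
  moreover have "c *\<^sub>R a \<in> A"
    using assms(1) calculation real_vector.subspace_scale by blast
  ultimately show ?thesis
    unfolding H using assms(4)
    by (intro CollectI exI[of _ "c *\<^sub>R a"] exI[of _ "c * t"]) (simp add: algebra_simps)
qed

lemma half_space_disjoint:
  assumes "subspace A" "half_space A B H" "x \<in> H"
  shows "x \<notin> A"
proof
  assume "x \<in> A"
  obtain v where v: "v \<in> B - A" and H: "H = {a + t *\<^sub>R v | a t. a \<in> A \<and> 0 < t}"
    using assms(2) by (rule half_spaceE)
  obtain a t where "x = a + t *\<^sub>R v" "a \<in> A" "0 < t"
    using assms(3) unfolding H by blast
  then have "v = (1 / t) *\<^sub>R (x - a)"
    by simp
  then have "v \<in> A"
    using assms(1) \<open>x \<in> A\<close> \<open>a \<in> A\<close> real_vector.subspace_diff real_vector.subspace_scale by metis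
  then show False
    using v by blast
qed

lemma half_space_subset:
  assumes "subspace A" "codim_one A B" "half_space A B H"
  shows "H \<subseteq> B - A"
proof
  fix x assume x: "x \<in> H"
  obtain v where v: "v \<in> B - A" and H: "H = {a + t *\<^sub>R v | a t. a \<in> A \<and> 0 < t}"
    using assms(3) by (rule half_spaceE)
  have "A \<subseteq> B" "subspace B"
    using assms(1,2) codim_one_psubset codim_one_subspace by blast+
  then have "x \<in> B"
    using x v unfolding H by (auto intro: real_vector.subspace_add real_vector.subspace_scale)
  then show "x \<in> B - A"
    using half_space_disjoint[OF assms(1,3) x] by blast
qed

lemma half_space_neg:
  assumes "subspace A" "half_space A B H" "x \<in> H"
  shows "- x \<notin> H"
proof
  assume "- x \<in> H"
  then have "x + - x \<in> H"
    using half_space_add assms by blast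
  then show False
    using half_space_disjoint[OF assms(1,2)] assms(1) real_vector.subspace_0 by fastforce
qed

lemma half_space_cases:
  assumes "subspace A" "codim_one A B" "half_space A B H" "y \<in> B - A"
  shows "y \<in> H \<or> - y \<in> H"
proof -
  obtain v where v: "v \<in> B - A" and H: "H = {a + t *\<^sub>R v | a t. a \<in> A \<and> 0 < t}"
    using assms(3) by (rule half_spaceE)
  have "y \<in> span (insert v A)"
    using codim_one_eq_span_insert[OF assms(1,2) v] assms(4) by blast
  then obtain a t where a: "a \<in> A" "y = a + t *\<^sub>R v"
    unfolding span_insert_subspace[OF assms(1)] by blast
  have "t \<noteq> 0"
    using a assms(4) by auto
  have "- a \<in> A"
    using assms(1) a(1) real_vector.subspace_neg by blast
  show ?thesis
  proof (cases "0 < t")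
    case True
    then show ?thesis
      unfolding H using a by blast
  next
    case False
    then have "- y = - a + (- t) *\<^sub>R v" "0 < - t"
      using a(2) \<open>t \<noteq> 0\<close> by simp_all
    then show ?thesis
      unfolding H using \<open>- a \<in> A\<close> by blast
  qed
qed

lemma codim_one_pairD:
  assumes "quot_chain W V' C" "codim_one_pair C A B"
  shows "subspace A" "codim_one A B" "V' \<subseteq> A" "B \<subseteq> W"
  using assms unfolding quot_chain_def codim_one_pair_def by auto

lemma codim_one_pairs_cases:
  assumes ch: "quot_chain W V' C" and "codim_one_pair C A B" "codim_one_pair C A' B'"
  shows "(A = A' \<and> B = B') \<or> B \<subseteq> A' \<or> B' \<subseteq> A"
proof -
  have sub: "\<And>G. G \<in> C \<Longrightarrow> subspace G"
    and cmp: "\<And>G H. G \<in> C \<Longrightarrow> H \<in> C \<Longrightarrow> G \<subseteq> H \<or> H \<subseteq> G"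
    using ch unfolding quot_chain_def by auto
  have *: "(A = A' \<and> B = B') \<or> B \<subseteq> A'"
    if p: "codim_one_pair C A B" and q: "codim_one_pair C A' B'" and "B \<subseteq> B'" for A B A' B'
  proof (rule disjCI)
    assume "\<not> B \<subseteq> A'"
    have C: "A \<in> C" "B \<in> C" "A' \<in> C" "B' \<in> C" and AB: "codim_one A B" and AB': "codim_one A' B'"
      using p q unfolding codim_one_pair_def by auto
    have "A' \<subseteq> B"
      using cmp C \<open>\<not> B \<subseteq> A'\<close> by blast
    then have "B = B'"
      using codim_one_between[OF sub sub AB' _ \<open>B \<subseteq> B'\<close>] C \<open>\<not> B \<subseteq> A'\<close> by blast
    have "A \<subset> B" "A' \<subset> B"
      using codim_one_psubset sub C AB AB' \<open>B = B'\<close> by blast+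
    moreover have "A \<subseteq> A' \<or> A' \<subseteq> A"
      using cmp C by blast
    ultimately have "A = A'"
      using codim_one_between[OF sub sub AB] codim_one_between[OF sub sub AB'] C \<open>B = B'\<close>
      by blast
    then show "A = A' \<and> B = B'"
      using \<open>B = B'\<close> by blast
  qed
  have "B \<subseteq> B' \<or> B' \<subseteq> B"
    using assms cmp unfolding codim_one_pair_def by blast
  then show ?thesis
    using *[OF assms(2,3)] *[OF assms(3,2)] by blast
qed

lemma chain_pos_iff:
  assumes "quot_chain W V' C" "orientation C ori"
  shows "chain_pos C ori y \<longleftrightarrow> (\<exists>A B. codim_one_pair C A B \<and> y \<in> ori A B)"
  using assms half_space_subset[OF codim_one_pairD(1,2)[OF assms(1)]]
  unfolding chain_pos_def orientation_def by blast

lemma chain_posI: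
  assumes "quot_chain W V' C" "orientation C ori" "codim_one_pair C A B" "y \<in> ori A B"
  shows "chain_pos C ori y"
  using chain_pos_iff[OF assms(1,2)] assms(3,4) by blast

lemma chain_posD:
  assumes "quot_chain W V' C" "orientation C ori" "chain_pos C ori y"
  shows "y \<in> W" "y \<notin> V'"
  using assms codim_one_pairD[OF assms(1)] unfolding chain_pos_def by blast+

lemma chain_pos_add_left:
  assumes ch: "quot_chain W V' C" and o: "orientation C ori"
    and "a \<in> V'" "chain_pos C ori x"
  shows "chain_pos C ori (a + x)"
proof -
  obtain A B where p: "codim_one_pair C A B" and x: "x \<in> ori A B"
    using assms(4) chain_pos_iff[OF ch o] by blast
  have "a + x \<in> ori A B"
    using half_space_add_left codim_one_pairD[OF ch p] o p x assms(3)
    unfolding orientation_def by blast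
  then show ?thesis
    by (rule chain_posI[OF ch o p])
qed

lemma chain_pos_add:
  assumes ch: "quot_chain W V' C" and o: "orientation C ori"
    and "chain_pos C ori x" "chain_pos C ori y"
  shows "chain_pos C ori (x + y)"
proof -
  obtain A B where p: "codim_one_pair C A B" and x: "x \<in> ori A B"
    using assms(3) chain_pos_iff[OF ch o] by blast
  obtain A' B' where q: "codim_one_pair C A' B'" and y: "y \<in> ori A' B'"
    using assms(4) chain_pos_iff[OF ch o] by blast
  have H: "half_space A B (ori A B)" "half_space A' B' (ori A' B')"
    using o p q unfolding orientation_def by blast+
  have xB: "x \<in> B" and yB': "y \<in> B'"
    using half_space_subset codim_one_pairD[OF ch] H p q x y by blast+
  consider "A = A' \<and> B = B'" | "B \<subseteq> A'" | "B' \<subseteq> A"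
    using codim_one_pairs_cases[OF ch p q] by blast
  then show ?thesis
  proof cases
    case 1
    then have "x + y \<in> ori A B"
      using half_space_add[OF codim_one_pairD(1)[OF ch p] H(1) x] y by blast
    then show ?thesis
      by (rule chain_posI[OF ch o p])
  next
    case 2
    then have "x + y \<in> ori A' B'"
      using half_space_add_left[OF codim_one_pairD(1)[OF ch q] H(2) _ y] xB by blast
    then show ?thesis
      by (rule chain_posI[OF ch o q])
  next
    case 3
    then have "y + x \<in> ori A B"
      using half_space_add_left[OF codim_one_pairD(1)[OF ch p] H(1) _ x] yB' by blast
    then show ?thesis
      using chain_posI[OF ch o p] by (simp add: add.commute)
  qed
qed

lemma chain_pos_scale:
  assumes ch: "quot_chain W V' C" and o: "orientation C ori"
    and "chain_pos C ori x" "0 < c"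
  shows "chain_pos C ori (c *\<^sub>R x)"
proof -
  obtain A B where p: "codim_one_pair C A B" and x: "x \<in> ori A B"
    using assms(3) chain_pos_iff[OF ch o] by blast
  have "c *\<^sub>R x \<in> ori A B"
    using half_space_scale codim_one_pairD[OF ch p] o p x assms(4)
    unfolding orientation_def by blast
  then show ?thesis
    by (rule chain_posI[OF ch o p])
qed

lemma chain_pos_neg:
  assumes ch: "quot_chain W V' C" and o: "orientation C ori"
    and "chain_pos C ori x"
  shows "\<not> chain_pos C ori (- x)"
proof
  assume "chain_pos C ori (- x)"
  then obtain A' B' where q: "codim_one_pair C A' B'" and y: "- x \<in> ori A' B'"
    using chain_pos_iff[OF ch o] by blast
  obtain A B where p: "codim_one_pair C A B" and x: "x \<in> ori A B"
    using assms(3) chain_pos_iff[OF ch o] by blast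
  have sA: "subspace A" "subspace A'"
    using codim_one_pairD(1)[OF ch] p q by blast+
  have H: "half_space A B (ori A B)" "half_space A' B' (ori A' B')"
    using o p q unfolding orientation_def by blast+
  have x': "x \<in> B - A" and y': "- x \<in> B' - A'"
    using half_space_subset codim_one_pairD[OF ch] H p q x y by blast+
  consider "A = A' \<and> B = B'" | "B \<subseteq> A'" | "B' \<subseteq> A"
    using codim_one_pairs_cases[OF ch p q] by blast
  then show False
  proof cases
    case 1
    then show False
      using half_space_neg[OF sA(1) H(1) x] y by blast
  next
    case 2
    then have "- x \<in> A'"
      using x' sA(2) real_vector.subspace_neg by blast
    then show False
      using y' by blast
  next
    case 3
    then have "- (- x) \<in> A"
      using y' sA(1) real_vector.subspace_neg by blast
    then show False
      using x' by simp
  qed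
qed

lemma quot_max_chain_insert:
  assumes m: "quot_max_chain W V' C" and U: "subspace U" "V' \<subseteq> U" "U \<subseteq> W"
    and cmp: "\<And>G. G \<in> C \<Longrightarrow> G \<subseteq> U \<or> U \<subseteq> G"
  shows "U \<in> C"
proof (rule ccontr)
  assume "U \<notin> C"
  then have "C \<subset> insert U C"
    by blast
  moreover have "quot_chain W V' (insert U C)"
    using m U cmp unfolding quot_max_chain_def quot_chain_def
    by (simp add: Ball_def) (metis subset_refl)
  ultimately show False
    using m unfolding quot_max_chain_def by blast
qed

lemma quot_max_chain_separating_pair:
  assumes m: "quot_max_chain W V' C"
    and "subspace V'" "V' \<subseteq> W" "subspace W" "y \<in> W" "y \<notin> V'"
  obtains A B where "codim_one_pair C A B" "y \<in> B - A"
proof -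
  have ch: "quot_chain W V' C"
    using m unfolding quot_max_chain_def by blast
  have sub: "\<And>G. G \<in> C \<Longrightarrow> subspace G \<and> V' \<subseteq> G \<and> G \<subseteq> W"
    and cmp: "\<And>G H. G \<in> C \<Longrightarrow> H \<in> C \<Longrightarrow> G \<subseteq> H \<or> H \<subseteq> G"
    using ch unfolding quot_chain_def by auto
  have "V' \<in> C"
    using quot_max_chain_insert[OF m assms(2) order.refl assms(3)] sub by blast
  define A where "A = \<Union>{G \<in> C. y \<notin> G}"
  define B where "B = span (insert y A)"
  have below: "A \<subseteq> G" if "G \<in> C" "y \<in> G" for G
    unfolding A_def using cmp that by blast
  have "y \<notin> A" "V' \<subseteq> A" "A \<subseteq> W"
    unfolding A_def using sub \<open>V' \<in> C\<close> assms(6) by blast+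
  have sA: "subspace A"
    unfolding A_def using sub cmp \<open>V' \<in> C\<close> assms(6) by (intro subspace_Union_chain) auto
  have "A \<in> C"
    using quot_max_chain_insert[OF m sA \<open>V' \<subseteq> A\<close> \<open>A \<subseteq> W\<close>] below unfolding A_def by blast
  have AB: "codim_one A B"
    unfolding B_def codim_one_iff[OF sA] using \<open>y \<notin> A\<close> by blast
  have "A \<subseteq> B" "y \<in> B"
    unfolding B_def using real_vector.span_superset by blast+
  have "B \<subseteq> W"
    unfolding B_def using assms(4,5) \<open>A \<subseteq> W\<close> by (intro real_vector.span_minimal) auto
  have "B \<subseteq> G" if "G \<in> C" "y \<in> G" for G
    unfolding B_def using below[OF that] that sub by (intro real_vector.span_minimal) auto
  moreover have "G \<subseteq> A" if "G \<in> C" "y \<notin> G" for G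
    unfolding A_def using that by blast
  moreover have "subspace B"
    unfolding B_def by (rule real_vector.subspace_span)
  ultimately have "B \<in> C"
    using quot_max_chain_insert[OF m _ _ \<open>B \<subseteq> W\<close>] \<open>V' \<subseteq> A\<close> \<open>A \<subseteq> B\<close> by blast
  show ?thesis
    using that[of A B] \<open>A \<in> C\<close> \<open>B \<in> C\<close> AB \<open>y \<in> B\<close> \<open>y \<notin> A\<close>
    unfolding codim_one_pair_def by blast
qed

lemma chain_pos_total:
  assumes om: "oriented_max_chain W V' C ori"
    and "subspace V'" "V' \<subseteq> W" "subspace W" "y \<in> W" "y \<notin> V'"
  shows "chain_pos C ori y \<or> chain_pos C ori (- y)"
proof -
  have m: "quot_max_chain W V' C" and o: "orientation C ori"
    using om unfolding oriented_max_chain_def by blast+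
  then have ch: "quot_chain W V' C"
    unfolding quot_max_chain_def by blast
  obtain A B where p: "codim_one_pair C A B" and y: "y \<in> B - A"
    using quot_max_chain_separating_pair[OF m assms(2-6)] by blast
  have sA: "subspace A" and "subspace B"
    using codim_one_pairD(1,2)[OF ch p] codim_one_subspace by blast+
  then have "- y \<in> B" "- y \<notin> A"
    using y real_vector.subspace_neg[of A "- y"] real_vector.subspace_neg[of B y] by auto
  then have "- y \<in> B - A"
    by blast
  moreover have "y \<in> ori A B \<or> - y \<in> ori A B"
    using half_space_cases codim_one_pairD[OF ch p] o p y unfolding orientation_def by blast
  ultimately show ?thesis
    using p y unfolding chain_pos_def by blast
qed

lemma oriented_max_chain_total_cone:
  assumes om: "oriented_max_chain W V' C ori" and V': "subspace V'" "V' \<subseteq> W" and "subspace W"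
  shows "total_cone V' W (V' \<union> Collect (chain_pos C ori))"
proof -
  have o: "orientation C ori" and ch: "quot_chain W V' C"
    using om unfolding oriented_max_chain_def quot_max_chain_def by blast+
  note pos_add_left = chain_pos_add_left[OF ch o]
  show ?thesis
  proof (intro total_cone.intro pointed_cone.intro convex_cone.intro total_cone_axioms.intro
      pointed_cone_axioms.intro)
    show "V' \<union> Collect (chain_pos C ori) \<subseteq> W"
      using V'(2) chain_posD[OF ch o] by blast
  next
    fix x y assume "x \<in> V' \<union> Collect (chain_pos C ori)" "y \<in> V' \<union> Collect (chain_pos C ori)"
    then show "x + y \<in> V' \<union> Collect (chain_pos C ori)"
      using real_vector.subspace_add[OF V'(1)] chain_pos_add[OF ch o] pos_add_left
        pos_add_left[of y x] by (auto simp: add.commute)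
  next
    fix x and t :: real assume x: "x \<in> V' \<union> Collect (chain_pos C ori)" and "0 \<le> t"
    show "t *\<^sub>R x \<in> V' \<union> Collect (chain_pos C ori)"
    proof (cases "t = 0")
      case True
      then show ?thesis
        using real_vector.subspace_0[OF V'(1)] by simp
    next
      case False
      then show ?thesis
        using x \<open>0 \<le> t\<close> real_vector.subspace_scale[OF V'(1)] chain_pos_scale[OF ch o] by auto
    qed
  next
    fix x assume "x \<in> V' \<union> Collect (chain_pos C ori)" "- x \<in> V' \<union> Collect (chain_pos C ori)"
    then show "x \<in> V'"
      using chain_pos_neg[OF ch o] real_vector.subspace_neg[OF V'(1), of "- x"] by auto
  next
    fix x assume "x \<in> W"
    then show "x \<in> V' \<union> Collect (chain_pos C ori) \<or> - x \<in> V' \<union> Collect (chain_pos C ori)"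
      using chain_pos_total[OF om V'(1,2) assms(4)] by blast
  qed (use assms in auto)
qed

section \<open>The maximal chain of a linear order\<close>

context total_cone
begin

definition convex_subspace where
  "convex_subspace G \<longleftrightarrow> subspace G \<and> Z \<subseteq> G \<and> G \<subseteq> W \<and>
     (\<forall>x b. x \<in> K \<longrightarrow> b - x \<in> K \<longrightarrow> b \<in> G \<longrightarrow> x \<in> G)"

(* The largest convex subspace not containing y, for y > 0. *)
definition infinitesimals where
  "infinitesimals y = {z \<in> W. \<forall>t. y + t *\<^sub>R z \<in> K}"

lemma convex_subspaceD:
  assumes "convex_subspace G"
  shows "subspace G" "Z \<subseteq> G" "G \<subseteq> W" "x \<in> K \<Longrightarrow> b - x \<in> K \<Longrightarrow> b \<in> G \<Longrightarrow> x \<in> G"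
  using assms unfolding convex_subspace_def by blast+

lemma subspace_infinitesimals:
  assumes y: "y \<in> K"
  shows "subspace (infinitesimals y)"
  unfolding real_vector.subspace_def
proof (intro conjI ballI allI)
  show "0 \<in> infinitesimals y"
    unfolding infinitesimals_def using y real_vector.subspace_0[OF subspace_W] by simp
next
  fix a b assume "a \<in> infinitesimals y" "b \<in> infinitesimals y"
  then have ab: "a \<in> W" "b \<in> W" "\<And>t. y + t *\<^sub>R a \<in> K" "\<And>t. y + t *\<^sub>R b \<in> K"
    unfolding infinitesimals_def by blast+
  have "y + t *\<^sub>R (a + b) \<in> K" for t
  proof -
    have "(1/2) *\<^sub>R (y + (2 * t) *\<^sub>R a) + (1/2) *\<^sub>R (y + (2 * t) *\<^sub>R b) \<in> K"
      using add_mem[OF scale_mem[OF ab(3)] scale_mem[OF ab(4)]] by simp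
    moreover have "(1/2) *\<^sub>R (y + (2 * t) *\<^sub>R a) + (1/2) *\<^sub>R (y + (2 * t) *\<^sub>R b) = y + t *\<^sub>R (a + b)"
      by (simp add: algebra_simps flip: scaleR_add_left)
    ultimately show ?thesis
      by simp
  qed
  then show "a + b \<in> infinitesimals y"
    unfolding infinitesimals_def using ab(1,2) real_vector.subspace_add[OF subspace_W] by blast
next
  fix c a assume "a \<in> infinitesimals y"
  then show "c *\<^sub>R a \<in> infinitesimals y"
    unfolding infinitesimals_def using real_vector.subspace_scale[OF subspace_W] by simp
qed

lemma convex_subspace_infinitesimals:
  assumes y: "y \<in> K"
  shows "convex_subspace (infinitesimals y)"
  unfolding convex_subspace_def
proof (intro conjI allI impI subspace_infinitesimals[OF y])
  show "Z \<subseteq> infinitesimals y"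
    unfolding infinitesimals_def
    using y subspace_in_cone cone_in_space add_mem real_vector.subspace_scale[OF subspace_Z] by blast
next
  show "infinitesimals y \<subseteq> W"
    unfolding infinitesimals_def by blast
next
  fix x b assume x: "x \<in> K" and "b - x \<in> K" "b \<in> infinitesimals y"
  have "y + t *\<^sub>R x \<in> K" for t
  proof (cases "0 \<le> t")
    case True
    then show ?thesis
      using x y add_mem scale_mem by blast
  next
    case False
    have "y + t *\<^sub>R b \<in> K" "0 \<le> - t"
      using \<open>b \<in> infinitesimals y\<close> False unfolding infinitesimals_def by auto
    then have "(y + t *\<^sub>R b) + (- t) *\<^sub>R (b - x) \<in> K"
      using add_mem scale_mem \<open>b - x \<in> K\<close> by blast
    then show ?thesis
      by (simp add: algebra_simps)
  qed
  then show "x \<in> infinitesimals y"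
    unfolding infinitesimals_def using x cone_in_space by blast
qed

lemma notin_infinitesimals:
  assumes "y \<in> K" "y \<notin> Z"
  shows "y \<notin> infinitesimals y"
proof
  assume "y \<in> infinitesimals y"
  then have "y + (- 2) *\<^sub>R y \<in> K"
    unfolding infinitesimals_def by blast
  then have "- y \<in> K"
    by (simp add: scaleR_2)
  then show False
    using pointed assms by blast
qed

lemma bdd_above_cut:
  assumes y: "y \<in> K" "y \<notin> Z" and "r *\<^sub>R y - x \<in> K"
  shows "bdd_above {s. x - s *\<^sub>R y \<in> K}"
proof (rule bdd_aboveI)
  fix s assume "s \<in> {s. x - s *\<^sub>R y \<in> K}"
  then have "(x - s *\<^sub>R y) + (r *\<^sub>R y - x) \<in> K"
    using assms(3) add_mem by blast
  then have "(r - s) *\<^sub>R y \<in> K"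
    by (simp add: algebra_simps)
  then show "s \<le> r"
    using nonneg_coeff[OF y] by fastforce
qed

lemma cut_downward_closed:
  assumes "y \<in> K" "x - s *\<^sub>R y \<in> K" "s' \<le> s"
  shows "x - s' *\<^sub>R y \<in> K"
proof -
  have "(x - s *\<^sub>R y) + (s - s') *\<^sub>R y \<in> K"
    using assms by (intro add_mem scale_mem) auto
  then show ?thesis
    by (simp add: algebra_simps)
qed

lemma standard_part_exists:
  assumes y: "y \<in> K" "y \<notin> Z" and x: "x \<in> W" and bounds: "x - s *\<^sub>R y \<in> K" "r *\<^sub>R y - x \<in> K"
  shows "\<exists>c. x - c *\<^sub>R y \<in> infinitesimals y"
proof -
  define L where "L = {s. x - s *\<^sub>R y \<in> K}"
  have bdd: "bdd_above L"
    unfolding L_def using bdd_above_cut[OF y bounds(2)] .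
  have "s \<in> L"
    unfolding L_def using bounds(1) by simp
  define c where "c = Sup L"
  have in_W: "x - a *\<^sub>R y \<in> W" for a
    using x y(1) cone_in_space real_vector.subspace_diff[OF subspace_W] real_vector.subspace_scale[OF subspace_W]
    by blast
  have key: "t *\<^sub>R (x - (c - 1 / t) *\<^sub>R y) = y + t *\<^sub>R (x - c *\<^sub>R y)" if "t \<noteq> 0" for t
    using that by (simp add: algebra_simps)
  have "y + t *\<^sub>R (x - c *\<^sub>R y) \<in> K" for t
  proof -
    consider "t = 0" | "0 < t" | "t < 0"
      by linarith
    then show ?thesis
    proof cases
      case 1
      then show ?thesis
        using y(1) by simp
    next
      case 2
      then have "c - 1 / t < Sup L"
        unfolding c_def by simp
      then obtain s' where "s' \<in> L" "c - 1 / t < s'"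
        using less_cSup_iff[OF _ bdd] \<open>s \<in> L\<close> by blast
      then have "x - (c - 1 / t) *\<^sub>R y \<in> K"
        using cut_downward_closed[OF y(1)] unfolding L_def by fastforce
      then show ?thesis
        using scale_mem[of _ t] key 2 by fastforce
    next
      case 3
      then have "c - 1 / t \<notin> L"
        using cSup_upper[OF _ bdd] unfolding c_def by fastforce
      then have "- (x - (c - 1 / t) *\<^sub>R y) \<in> K"
        using total in_W unfolding L_def by blast
      then have "(- t) *\<^sub>R (- (x - (c - 1 / t) *\<^sub>R y)) \<in> K"
        using 3 by (intro scale_mem) auto
      then have "t *\<^sub>R (x - (c - 1 / t) *\<^sub>R y) \<in> K"
        by (simp only: scaleR_minus_left scaleR_minus_right minus_minus)
      then show ?thesis
        using key[of t] 3 by simp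
    qed
  qed
  then show ?thesis
    unfolding infinitesimals_def using in_W by blast
qed

lemma convex_subspace_witness:
  assumes "convex_subspace G" "convex_subspace H" "\<not> G \<subseteq> H"
  obtains x where "x \<in> K" "x \<in> G" "x \<notin> H"
proof -
  obtain x where x: "x \<in> G" "x \<notin> H"
    using assms(3) by blast
  have "- x \<in> G" "- x \<notin> H"
    using x convex_subspaceD(1)[OF assms(1)] convex_subspaceD(1)[OF assms(2)]
      real_vector.subspace_neg[of G x] real_vector.subspace_neg[of H "- x"] by auto
  moreover have "x \<in> K \<or> - x \<in> K"
    using total x(1) convex_subspaceD(3)[OF assms(1)] by blast
  ultimately show ?thesis
    using that x by blast
qed

lemma convex_subspaces_comparable:
  assumes G: "convex_subspace G" and H: "convex_subspace H"
  shows "G \<subseteq> H \<or> H \<subseteq> G"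
proof (rule ccontr)
  assume "\<not> (G \<subseteq> H \<or> H \<subseteq> G)"
  then obtain x z where x: "x \<in> K" "x \<in> G" "x \<notin> H" and z: "z \<in> K" "z \<in> H" "z \<notin> G"
    using convex_subspace_witness[OF G H] convex_subspace_witness[OF H G] by metis
  have "z - x \<in> W"
    using x(2) z(2) convex_subspaceD(3)[OF G] convex_subspaceD(3)[OF H]
      real_vector.subspace_diff[OF subspace_W] by blast
  then have "z - x \<in> K \<or> x - z \<in> K"
    using total by fastforce
  then show False
    using convex_subspaceD(4)[OF H x(1) _ z(2)] convex_subspaceD(4)[OF G z(1) _ x(2)] x(3) z(3)
    by blast
qed

lemma convex_subspace_if_comparable:
  assumes U: "subspace U" "Z \<subseteq> U" "U \<subseteq> W"
    and cmp: "\<And>G. convex_subspace G \<Longrightarrow> G \<subseteq> U \<or> U \<subseteq> G"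
  shows "convex_subspace U"
  unfolding convex_subspace_def
proof (intro conjI allI impI U)
  fix x b assume x: "x \<in> K" and bx: "b - x \<in> K" and b: "b \<in> U"
  have bK: "b \<in> K"
    using add_mem[OF x bx] by simp
  show "x \<in> U"
  proof (cases "b \<in> Z")
    case True
    then have "(b - x) + - b \<in> K"
      using add_mem[OF bx] subspace_in_cone real_vector.subspace_neg[OF subspace_Z] by blast
    then have "x \<in> Z"
      using pointed[OF x] by simp
    then show ?thesis
      using U(2) by blast
  next
    case False
    then have "infinitesimals b \<subseteq> U"
      using cmp[OF convex_subspace_infinitesimals[OF bK]] notin_infinitesimals[OF bK] b by blast
    moreover obtain c where "x - c *\<^sub>R b \<in> infinitesimals b"
      using standard_part_exists[OF bK False, of x 0 1] x bx cone_in_space by auto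
    ultimately have "(x - c *\<^sub>R b) + c *\<^sub>R b \<in> U"
      using b real_vector.subspace_add[OF U(1)] real_vector.subspace_scale[OF U(1)] by blast
    then show ?thesis
      by simp
  qed
qed

lemma quot_max_chain_convex_subspaces: "quot_max_chain W Z (Collect convex_subspace)"
  unfolding quot_max_chain_def
proof (intro conjI notI)
  show "quot_chain W Z (Collect convex_subspace)"
    unfolding quot_chain_def using convex_subspaceD(1-3) convex_subspaces_comparable by auto
next
  assume "\<exists>C. quot_chain W Z C \<and> Collect convex_subspace \<subset> C"
  then obtain C U where C: "quot_chain W Z C" "Collect convex_subspace \<subseteq> C"
    and U: "U \<in> C" "\<not> convex_subspace U"
    by blast
  have "subspace U" "Z \<subseteq> U" "U \<subseteq> W" and "\<And>G. G \<in> C \<Longrightarrow> G \<subseteq> U \<or> U \<subseteq> G"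
    using C(1) U(1) unfolding quot_chain_def by auto
  then have "convex_subspace U"
    using C(2) by (intro convex_subspace_if_comparable) auto
  then show False
    using U(2) by blast
qed

lemma codim_one_pair_pos_witness:
  assumes "codim_one_pair (Collect convex_subspace) A B"
  shows "\<exists>v. v \<in> B - A \<and> v \<in> K"
proof -
  have A: "convex_subspace A" and B: "convex_subspace B" and AB: "codim_one A B"
    using assms unfolding codim_one_pair_def by auto
  obtain v where v: "v \<notin> A" "B = span (insert v A)"
    using AB codim_one_iff convex_subspaceD(1)[OF A] by blast
  have "v \<in> B" "- v \<in> B"
    using v(2) real_vector.span_base real_vector.span_neg by blast+
  moreover have "- v \<notin> A"
    using v(1) convex_subspaceD(1)[OF A] real_vector.subspace_neg[of A "- v"] by auto
  moreover have "v \<in> K \<or> - v \<in> K"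
    using total \<open>v \<in> B\<close> convex_subspaceD(3)[OF B] by blast
  ultimately show ?thesis
    using v(1) by blast
qed

definition positive_orientation where
  "positive_orientation A B = {a + t *\<^sub>R (SOME v. v \<in> B - A \<and> v \<in> K) | a t. a \<in> A \<and> 0 < t}"

lemma orientation_positive_orientation:
  "orientation (Collect convex_subspace) positive_orientation"
  unfolding orientation_def half_space_def positive_orientation_def
  using someI_ex[OF codim_one_pair_pos_witness] by blast

lemma chain_pos_positive_orientation_mem:
  assumes "chain_pos (Collect convex_subspace) positive_orientation y"
  shows "y \<in> K"
proof (rule ccontr)
  assume "y \<notin> K"
  obtain A B where p: "codim_one_pair (Collect convex_subspace) A B" and y: "y \<in> B - A"
    "y \<in> positive_orientation A B"
    using assms unfolding chain_pos_def by blast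
  define v where "v = (SOME v. v \<in> B - A \<and> v \<in> K)"
  have v: "v \<in> B - A" "v \<in> K"
    using someI_ex[OF codim_one_pair_pos_witness[OF p]] unfolding v_def by blast+
  have A: "convex_subspace A" and B: "convex_subspace B"
    using p unfolding codim_one_pair_def by auto
  obtain a t where a: "y = a + t *\<^sub>R v" "a \<in> A" "0 < t"
    using y(2) unfolding positive_orientation_def v_def by blast
  have "- y \<in> K"
    using total \<open>y \<notin> K\<close> y(1) convex_subspaceD(3)[OF B] by blast
  then have "- a - t *\<^sub>R v \<in> K"
    using a(1) by simp
  moreover have "t *\<^sub>R v \<in> K" "- a \<in> A"
    using scale_mem v(2) a(2,3) convex_subspaceD(1)[OF A] real_vector.subspace_neg by auto
  ultimately have "t *\<^sub>R v \<in> A"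
    using convex_subspaceD(4)[OF A] by blast
  then have "(1 / t) *\<^sub>R (t *\<^sub>R v) \<in> A"
    using convex_subspaceD(1)[OF A] real_vector.subspace_scale by blast
  then show False
    using a(3) v(1) by simp
qed

lemma exists_oriented_max_chain:
  obtains C ori where "oriented_max_chain W Z C ori"
    "\<And>y. chain_pos C ori y \<longleftrightarrow> y \<in> K \<and> y \<notin> Z"
proof
  let ?C = "Collect convex_subspace"
  show om: "oriented_max_chain W Z ?C positive_orientation"
    unfolding oriented_max_chain_def
    using quot_max_chain_convex_subspaces orientation_positive_orientation by blast
  then have ch: "quot_chain W Z ?C"
    unfolding oriented_max_chain_def quot_max_chain_def by blast
  have ZW: "Z \<subseteq> W"
    using subspace_in_cone cone_in_space by blast
  interpret chain: total_cone Z W "Z \<union> Collect (chain_pos ?C positive_orientation)"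
    using oriented_max_chain_total_cone[OF om subspace_Z ZW subspace_W] .
  fix y
  show "chain_pos ?C positive_orientation y \<longleftrightarrow> y \<in> K \<and> y \<notin> Z"
  proof
    assume "chain_pos ?C positive_orientation y"
    then show "y \<in> K \<and> y \<notin> Z"
      using chain_pos_positive_orientation_mem chain_posD[OF ch orientation_positive_orientation]
      by blast
  next
    assume y: "y \<in> K \<and> y \<notin> Z"
    then have "- y \<notin> Z"
      using real_vector.subspace_neg[OF subspace_Z, of "- y"] by auto
    moreover have "\<not> chain_pos ?C positive_orientation (- y)"
      using chain_pos_positive_orientation_mem pointed y by blast
    ultimately show "chain_pos ?C positive_orientation y"
      using chain.total y cone_in_space by blast
  qed
qed

end

section \<open>Parabolic decompositions\<close>

lemma convex_cone_nonneg_comb_plus: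
  assumes Z: "subspace Z" and W: "subspace W" "Z \<subseteq> W" "P \<subseteq> W"
  shows "convex_cone Z W {k + w | k w. k \<in> nonneg_comb P \<and> w \<in> Z}"
proof (intro convex_cone.intro)
  show "Z \<subseteq> {k + w | k w. k \<in> nonneg_comb P \<and> w \<in> Z}"
    using nonneg_comb_0 by force
  have "nonneg_comb P \<subseteq> W"
    using nonneg_comb_subset_span real_vector.span_minimal[OF W(3,1)] by blast
  then show "{k + w | k w. k \<in> nonneg_comb P \<and> w \<in> Z} \<subseteq> W"
    using W(2) real_vector.subspace_add[OF W(1)] by blast
next
  fix x y assume "x \<in> {k + w | k w. k \<in> nonneg_comb P \<and> w \<in> Z}"
    "y \<in> {k + w | k w. k \<in> nonneg_comb P \<and> w \<in> Z}"
  then obtain k w l u where "x = k + w" "y = l + u" "k \<in> nonneg_comb P" "l \<in> nonneg_comb P"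
    "w \<in> Z" "u \<in> Z"
    by blast
  then show "x + y \<in> {k + w | k w. k \<in> nonneg_comb P \<and> w \<in> Z}"
    using nonneg_comb_add real_vector.subspace_add[OF Z]
    by (intro CollectI exI[of _ "k + l"] exI[of _ "w + u"]) (simp_all add: algebra_simps)
next
  fix x and t :: real assume "x \<in> {k + w | k w. k \<in> nonneg_comb P \<and> w \<in> Z}" "0 \<le> t"
  then obtain k w where "x = k + w" "k \<in> nonneg_comb P" "w \<in> Z"
    by blast
  then show "t *\<^sub>R x \<in> {k + w | k w. k \<in> nonneg_comb P \<and> w \<in> Z}"
    using nonneg_comb_scale[OF _ \<open>0 \<le> t\<close>] real_vector.subspace_scale[OF Z]
    by (intro CollectI exI[of _ "t *\<^sub>R k"] exI[of _ "t *\<^sub>R w"]) (simp_all add: scaleR_add_right)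
qed (use assms in auto)

lemma parabolicD:
  assumes "parabolic \<Delta> Dm D0 Dp"
  shows "\<Delta> = Dm \<union> D0 \<union> Dp" "\<forall>a\<in>Dm. a \<notin> span D0" "\<forall>b\<in>Dp. b \<notin> span D0"
    "\<not> (\<exists>S. subspace S \<and> span D0 \<subset> S \<and>
            S \<subseteq> {k + w | k w. k \<in> nonneg_comb (Dp \<union> uminus ` Dm) \<and> w \<in> span D0})"
  using assms unfolding parabolic_def by simp_all

lemma parabolic_pointed_cone:
  assumes par: "parabolic \<Delta> Dm D0 Dp"
  shows "pointed_cone (span D0) (span \<Delta>)
           {k + w | k w. k \<in> nonneg_comb (Dp \<union> uminus ` Dm) \<and> w \<in> span D0}"
    (is "pointed_cone ?Z ?W ?K")
proof -
  have "D0 \<subseteq> \<Delta>" "Dp \<subseteq> \<Delta>" "Dm \<subseteq> \<Delta>"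
    using parabolicD(1)[OF par] by blast+
  have "?Z \<subseteq> ?W"
    using real_vector.span_mono[OF \<open>D0 \<subseteq> \<Delta>\<close>] .
  moreover have "Dp \<union> uminus ` Dm \<subseteq> ?W"
    using \<open>Dp \<subseteq> \<Delta>\<close> \<open>Dm \<subseteq> \<Delta>\<close> real_vector.span_base[of _ \<Delta>] real_vector.span_neg[of _ \<Delta>]
    by auto
  ultimately interpret convex_cone ?Z ?W ?K
    by (intro convex_cone_nonneg_comb_plus real_vector.subspace_span)
  show ?thesis
  proof (intro pointed_cone.intro pointed_cone_axioms.intro)
    show "convex_cone ?Z ?W ?K"
      by (rule convex_cone_axioms)
  next
    fix x assume "x \<in> ?K" "- x \<in> ?K"
    then have "span (insert x ?Z) \<subseteq> ?K"
      by (rule span_insert_subset)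
    moreover have "?Z \<subseteq> span (insert x ?Z)"
      using real_vector.span_superset by blast
    moreover have "x \<in> span (insert x ?Z)"
      by (simp add: real_vector.span_base)
    ultimately show "x \<in> ?Z"
      using parabolicD(4)[OF par] real_vector.subspace_span by blast
  qed
qed

lemma parabolic_eq_cone_decomposition:
  assumes par: "parabolic \<Delta> Dm D0 Dp" and K: "pointed_cone (span D0) W K"
    and "Dp \<union> uminus ` Dm \<subseteq> K"
  shows "Dm = {\<alpha> \<in> \<Delta> - span D0. - \<alpha> \<in> K}" "D0 = \<Delta> \<inter> span D0"
    "Dp = {\<alpha> \<in> \<Delta> - span D0. \<alpha> \<in> K}"
proof -
  note cover = parabolicD(1)[OF par] and off = parabolicD(2,3)[OF par]
  have "D0 \<subseteq> span D0"
    by (rule real_vector.span_superset)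
  moreover have "- \<alpha> \<notin> K" if "\<alpha> \<in> Dp" for \<alpha>
    using pointed_cone.pointed[OF K, of \<alpha>] assms(3) off(2) that by blast
  moreover have "\<alpha> \<notin> K" if "\<alpha> \<in> Dm" for \<alpha>
    using pointed_cone.pointed[OF K, of "- \<alpha>"] real_vector.span_neg[of "- \<alpha>" D0] assms(3) off(1) that
    by auto
  ultimately show "Dm = {\<alpha> \<in> \<Delta> - span D0. - \<alpha> \<in> K}" "D0 = \<Delta> \<inter> span D0"
    "Dp = {\<alpha> \<in> \<Delta> - span D0. \<alpha> \<in> K}"
    using cover off assms(3) by auto
qed

lemma parabolic_imp_oriented_max_chain:
  assumes par: "parabolic \<Delta> Dm D0 Dp"
  obtains C ori where "oriented_max_chain (span \<Delta>) (span D0) C ori"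
    "Dm = assoc_minus \<Delta> (span D0) C ori" "D0 = \<Delta> \<inter> span D0" "Dp = assoc_plus \<Delta> (span D0) C ori"
proof -
  let ?K0 = "{k + w | k w. k \<in> nonneg_comb (Dp \<union> uminus ` Dm) \<and> w \<in> span D0}"
  obtain K where "?K0 \<subseteq> K" and K: "total_cone (span D0) (span \<Delta>) K"
    using pointed_cone.extends_to_total_cone[OF parabolic_pointed_cone[OF par]] by blast
  have "Dp \<union> uminus ` Dm \<subseteq> ?K0"
  proof
    fix x assume "x \<in> Dp \<union> uminus ` Dm"
    then have "x \<in> nonneg_comb (Dp \<union> uminus ` Dm)"
      by (rule nonneg_comb_superset)
    moreover have "x = x + 0" "0 \<in> span D0"
      by (simp_all add: real_vector.span_zero)
    ultimately show "x \<in> ?K0"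
      by blast
  qed
  then have parts: "Dm = {\<alpha> \<in> \<Delta> - span D0. - \<alpha> \<in> K}" "D0 = \<Delta> \<inter> span D0"
    "Dp = {\<alpha> \<in> \<Delta> - span D0. \<alpha> \<in> K}"
    using parabolic_eq_cone_decomposition[OF par total_cone.axioms(1)[OF K]] \<open>?K0 \<subseteq> K\<close> by blast+
  obtain C ori where om: "oriented_max_chain (span \<Delta>) (span D0) C ori"
    and pos: "\<And>y. chain_pos C ori y \<longleftrightarrow> y \<in> K \<and> y \<notin> span D0"
    using total_cone.exists_oriented_max_chain[OF K] by blast
  have neg: "- \<alpha> \<in> span D0 \<longleftrightarrow> \<alpha> \<in> span D0" for \<alpha>
    using real_vector.span_neg by force
  have "Dm = assoc_minus \<Delta> (span D0) C ori"
    unfolding assoc_minus_def pos by (subst parts(1)) (auto simp: neg)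
  moreover have "Dp = assoc_plus \<Delta> (span D0) C ori"
    unfolding assoc_plus_def pos by (subst parts(3)) auto
  ultimately show ?thesis
    using that om parts(2) by blast
qed

lemma oriented_max_chain_imp_parabolic:
  assumes "subspace V'" "V' \<subseteq> span \<Delta>" "oriented_max_chain (span \<Delta>) V' C ori"
  shows "parabolic \<Delta> (assoc_minus \<Delta> V' C ori) (\<Delta> \<inter> V') (assoc_plus \<Delta> V' C ori)"
proof -
  interpret total_cone V' "span \<Delta>" "V' \<union> Collect (chain_pos C ori)"
    using oriented_max_chain_total_cone[OF assms(3,1,2) real_vector.subspace_span] .
  have "assoc_minus \<Delta> V' C ori = {\<alpha> \<in> \<Delta> - V'. - \<alpha> \<in> V' \<union> Collect (chain_pos C ori)}"
    "assoc_plus \<Delta> V' C ori = {\<alpha> \<in> \<Delta> - V'. \<alpha> \<in> V' \<union> Collect (chain_pos C ori)}"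
    unfolding assoc_minus_def assoc_plus_def
    using real_vector.subspace_neg[OF subspace_Z] by force+
  then show ?thesis
    using parabolic_cone_decomposition[OF real_vector.span_superset] by simp
qed

theorem theorem10:
  fixes \<Delta> :: "'v::real_vector set"
  assumes "0 \<notin> \<Delta>"
  shows "(\<forall>Dm D0 Dp. parabolic \<Delta> Dm D0 Dp \<longrightarrow>
            (\<exists>C ori. oriented_max_chain (span \<Delta>) (span D0) C ori \<and>
                    Dm = assoc_minus \<Delta> (span D0) C ori \<and>
                    D0 = \<Delta> \<inter> span D0 \<and>
                    Dp = assoc_plus \<Delta> (span D0) C ori))
       \<and> (\<forall>V' C ori. subspace V' \<and> V' \<subseteq> span \<Delta> \<and> oriented_max_chain (span \<Delta>) V' C ori \<longrightarrow>
            parabolic \<Delta> (assoc_minus \<Delta> V' C ori) (\<Delta> \<inter> V') (assoc_plus \<Delta> V' C ori))"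
  using parabolic_imp_oriented_max_chain oriented_max_chain_imp_parabolic by metis

end
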